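(* If $W$ is an s-word with at least two proper letters and $W$ satisfies the parity conditions, then the projection $W|_{y=\epsilon}$ is an s-word for each proper letter $y$.
   Context: Words: alphabet $\Sigma$ with distinguished letter $\epsilon$ and letter $\sigma$; letters of $\Sigma\setminus\{\epsilon,\sigma\}$ are proper letters; $x^k$ is $k$ copies of $x$. The pattern $\pi(w)$ is obtained by repeatedly deleting $\epsilon\epsilon$; $v\sim w$ if related by cyclic shift and/or reversal; $u\approx v$ iff $\pi(u)\sim\pi(v)$; $[w]$ is the class (cyclic word). An s-word is a cyclic word of one of the forms (i) $[a^\lambda]$ with $\Sigma=\{\epsilon,a\}$, $\lambda$ odd; (ii) $[\sigma x_{i_1}^{\lambda_1}\epsilon x_{i_2}^{\lambda_2}\epsilon\cdots\epsilon x_{i_s}^{\lambda_s}]$ with positive $\lambda_j$, proper letters $x_{i_j}$, $x_{i_h}\neq x_{i_{h+1}}$, and the exponents of each proper letter summing to an even number. Induced order (type (ii)): take a representative $\sigma u$ equal to its own pattern, replace each interval $xx$ of $u$ ($x$ proper) by $x\epsilon\epsilon x$ to get $z$, let $v=\sigma\epsilon\epsilon z\epsilon\epsilon=v_1\cdots v_N$ arranged cyclically; $\sigma$ is least and for proper $x\neq y$, $x\prec y$ iff the least cyclic distance from position $1$ to a position labeled $x$ is smaller than for $y$. Parity conditions: $W$ has a representative $\sigma a^{\lambda_1}\epsilon x_{i_2}^{\lambda_2}\epsilon\cdots\epsilon x_{i_s}^{\lambda_s}$ (consecutive letters distinct), $a$ the $\prec$-least proper letter, such that (i) $\lambda_1,\lambda_s$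 are odd; (ii) for $h=2,\dots,s-1$, $\lambda_h$ is odd iff $x_{i_{h-1}}\neq x_{i_{h+1}}$ (where $x_{i_1}=a$). Projection: for $W=[w]$ with $p\ge 2$ proper letters and a proper letter $y$, $w|_{y=\epsilon}$ is obtained by replacing all occurrences of $y$ by $\epsilon$, and if $p=2$, additionally replacing $\sigma$ by the other proper letter; $W|_{y=\epsilon}=[w|_{y=\epsilon}]$. *)

theory Defs
  imports Main
begin

datatype letter = Eps | Sig | Prop nat

definition proper :: "letter \<Rightarrow> bool" where
  "proper c \<longleftrightarrow> c \<noteq> Eps \<and> c \<noteq> Sig"

type_synonym word = "letter list"

definition sim :: "word \<Rightarrow> word \<Rightarrow> bool" where
  "sim v w \<longleftrightarrow> (\<exists>n. v = rotate n w \<or> v = rev (rotate n w))"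

text \<open>One deletion of a (cyclically) adjacent pair of epsilons.\<close>
definition del_step :: "word \<Rightarrow> word \<Rightarrow> bool" where
  "del_step u v \<longleftrightarrow>
     (\<exists>xs ys. u = xs @ [Eps, Eps] @ ys \<and> v = xs @ ys) \<or>
     (\<exists>xs. u = Eps # xs @ [Eps] \<and> v = xs)"

definition is_pattern :: "word \<Rightarrow> word \<Rightarrow> bool" where
  "is_pattern w p \<longleftrightarrow> del_step\<^sup>*\<^sup>* w p \<and> \<not> (\<exists>q. del_step p q)"

definition approx :: "word \<Rightarrow> word \<Rightarrow> bool" where
  "approx u v \<longleftrightarrow> (\<exists>pu pv. is_pattern u pu \<and> is_pattern v pv \<and> sim pu pv)"

definition cls :: "word \<Rightarrow> word set" where
  "cls w = {u. approx u w}"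

fun join_eps :: "word list \<Rightarrow> word" where
  "join_eps [] = []"
| "join_eps [b] = b"
| "join_eps (b # c # bs) = b @ Eps # join_eps (c # bs)"

text \<open>Block words  sigma x1^l1 eps x2^l2 eps ... eps xs^ls.\<close>
definition blocks_word :: "(letter \<times> nat) list \<Rightarrow> word" where
  "blocks_word bs = Sig # join_eps (map (\<lambda>(x, l). replicate l x) bs)"

definition blocks_ok :: "(letter \<times> nat) list \<Rightarrow> bool" where
  "blocks_ok bs \<longleftrightarrow> bs \<noteq> [] \<and> (\<forall>(x, l) \<in> set bs. proper x \<and> 0 < l) \<and>
     (\<forall>h. Suc h < length bs \<longrightarrow> fst (bs ! h) \<noteq> fst (bs ! Suc h))"

definition s_word :: "word set \<Rightarrow> bool" where
  "s_word W \<longleftrightarrow>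
     (\<exists>a lam. proper a \<and> odd lam \<and> W = cls (replicate lam a)) \<or>
     (\<exists>bs. blocks_ok bs \<and>
        (\<forall>x. even (\<Sum>h<length bs. if fst (bs ! h) = x then snd (bs ! h) else 0)) \<and>
        W = cls (blocks_word bs))"

definition proper_letters :: "word \<Rightarrow> letter set" where
  "proper_letters w = {c \<in> set w. proper c}"

definition proper_letters_cls :: "word set \<Rightarrow> letter set" where
  "proper_letters_cls W = (\<Union>u\<in>W. proper_letters u)"

fun ins_eps :: "word \<Rightarrow> word" where
  "ins_eps [] = []"
| "ins_eps [x] = [x]"
| "ins_eps (x # y # rest) =
     (if x = y \<and> proper x then x # Eps # Eps # ins_eps (y # rest) else x # ins_eps (y # rest))"

text \<open>Least cyclic distance from position 1 (index 0) to a position labelled x.\<close>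
definition min_dist :: "word \<Rightarrow> letter \<Rightarrow> nat" where
  "min_dist v x = Min {min i (length v - i) | i. i < length v \<and> v ! i = x}"

definition induced_prec :: "word set \<Rightarrow> letter \<Rightarrow> letter \<Rightarrow> bool" where
  "induced_prec W x y \<longleftrightarrow>
     (\<exists>u. Sig # u \<in> W \<and> is_pattern (Sig # u) (Sig # u) \<and>
        (let v = Sig # Eps # Eps # ins_eps u @ [Eps, Eps] in min_dist v x < min_dist v y))"

definition parity_conditions :: "word set \<Rightarrow> bool" where
  "parity_conditions W \<longleftrightarrow>
     (\<exists>bs. blocks_ok bs \<and> blocks_word bs \<in> W \<and>
        (let a = fst (bs ! 0); s = length bs in
          a \<in> proper_letters_cls W \<and>
          (\<forall>x \<in> proper_letters_cls W. x \<noteq> a \<longrightarrow> induced_prec W a x) \<and>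
          odd (snd (bs ! 0)) \<and> odd (snd (bs ! (s - 1))) \<and>
          (\<forall>h. 1 \<le> h \<and> h < s - 1 \<longrightarrow>
             (odd (snd (bs ! h)) \<longleftrightarrow> fst (bs ! (h - 1)) \<noteq> fst (bs ! (h + 1))))))"

definition proj :: "letter \<Rightarrow> word \<Rightarrow> word" where
  "proj y w =
     (if card (proper_letters w) = 2 then
        (let b = (THE b. proper_letters w - {y} = {b}) in
          map (\<lambda>c. if c = y then Eps else if c = Sig then b else c) w)
      else map (\<lambda>c. if c = y then Eps else c) w)"

end

theory Submission
  imports Defs
begin

text \<open>Up to rotation and reversal, the pattern of a word is its cyclic normal form: cancel
  adjacent epsilon pairs freely, then strip one epsilon from each end if both ends are epsilons.
  Hence \<open>\<approx>\<close> is an equivalence, it is preserved by letter substitutions fixing epsilon, and it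
  preserves the multiplicity of every letter other than epsilon.

  Apply the substitution defining the projection to the block representative provided by the parity
  conditions. A block \<open>y\<^sup>\<lambda>\<close> turns, together with its two separators, into \<open>\<epsilon>\<^sup>\<lambda>\<^sup>+\<^sup>2\<close>. For odd
  \<open>\<lambda>\<close> this reduces to one epsilon between two distinct letters; for even \<open>\<lambda>\<close> it vanishes and the two
  equal neighbouring blocks merge; an odd first or last block disappears together with its single
  separator. So the image reduces to a block word again, and comparing letter multiplicities shows
  that the exponent sums stay even. With exactly two proper letters, sigma becomes the remaining
  letter \<open>b\<close> and the image collapses to \<open>b\<^sup>m\<^sup>+\<^sup>1\<close>, where \<open>m + 1\<close> is odd because sigma occurs once
  and \<open>b\<close> an even number of times.\<close>

section \<open>Free cancellation of adjacent epsilons\<close>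

definition cancel_cons :: "letter \<Rightarrow> word \<Rightarrow> word" where
  "cancel_cons x r = (if x = Eps \<and> r \<noteq> [] \<and> hd r = Eps then tl r else x # r)"

fun reduce :: "word \<Rightarrow> word" where
  "reduce [] = []"
| "reduce (x # xs) = cancel_cons x (reduce xs)"

fun reduced :: "word \<Rightarrow> bool" where
  "reduced [] = True"
| "reduced [x] = True"
| "reduced (x # y # r) = (\<not> (x = Eps \<and> y = Eps) \<and> reduced (y # r))"

lemma reduced_Cons: "reduced (x # r) \<longleftrightarrow> reduced r \<and> (x = Eps \<longrightarrow> r = [] \<or> hd r \<noteq> Eps)"
  by (cases r) auto

lemma reduced_append:
  "reduced (u @ v) \<longleftrightarrow> reduced u \<and> reduced v \<and> \<not> (u \<noteq> [] \<and> v \<noteq> [] \<and> last u = Eps \<and> hd v = Eps)"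
  by (induction u) (auto simp: reduced_Cons)

lemma reduced_rev: "reduced (rev u) \<longleftrightarrow> reduced u"
  by (induction u) (auto simp: reduced_append reduced_Cons last_rev hd_rev)

lemma not_reduced_split: "\<not> reduced u \<Longrightarrow> \<exists>xs ys. u = xs @ Eps # Eps # ys"
proof (induction u rule: reduced.induct)
  case (3 x y r)
  show ?case
  proof (cases "x = Eps \<and> y = Eps")
    case True
    then show ?thesis by (metis append_Nil)
  next
    case False
    then obtain xs ys where "y # r = xs @ Eps # Eps # ys" using 3 by auto
    then show ?thesis by (metis append_Cons)
  qed
qed auto

lemma reduced_cancel_cons: "reduced r \<Longrightarrow> reduced (cancel_cons x r)"
  by (cases r) (auto simp: cancel_cons_def reduced_Cons)

lemma reduced_reduce: "reduced (reduce u)"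
  by (induction u) (auto simp: reduced_cancel_cons)

lemma reduce_reduced: "reduced u \<Longrightarrow> reduce u = u"
  by (induction u) (auto simp: reduced_Cons cancel_cons_def)

lemma reduce_idem: "reduce (reduce u) = reduce u"
  by (rule reduce_reduced[OF reduced_reduce])

lemma cancel_cons_Eps_Eps: "reduced r \<Longrightarrow> cancel_cons Eps (cancel_cons Eps r) = r"
  by (cases r) (auto simp: cancel_cons_def reduced_Cons)

lemma reduce_Eps_Eps: "reduce (xs @ Eps # Eps # ys) = reduce (xs @ ys)"
  by (induction xs) (auto simp: cancel_cons_Eps_Eps reduced_reduce)

lemma reduce_append_reduce_left: "reduce (u @ v) = reduce (reduce u @ v)"
proof (induction u)
  case (Cons x u)
  show ?case
  proof (cases "x = Eps \<and> reduce u \<noteq> [] \<and> hd (reduce u) = Eps")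
    case True
    then obtain t where t: "reduce u = Eps # t" by (cases "reduce u") auto
    have "reduce ((x # u) @ v) = cancel_cons Eps (cancel_cons Eps (reduce (t @ v)))"
      using Cons True t by simp
    also have "\<dots> = reduce (t @ v)" by (rule cancel_cons_Eps_Eps[OF reduced_reduce])
    finally show ?thesis using True t by (simp add: cancel_cons_def)
  next
    case False
    then have "reduce (x # u) = x # reduce u" by (auto simp: cancel_cons_def)
    then show ?thesis using Cons by simp
  qed
qed simp

lemma reduce_append_reduce_right: "reduce (u @ v) = reduce (u @ reduce v)"
  by (induction u) (auto simp: reduce_idem)

lemma reduce_append_cong: "reduce v = reduce v' \<Longrightarrow> reduce (u @ v) = reduce (u @ v')"
  by (metis reduce_append_reduce_right)

lemma reduce_rev: "reduce (rev u) = rev (reduce u)"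
proof (induction u)
  case (Cons x u)
  have "reduce (rev (x # u)) = reduce (rev (reduce u) @ [x])"
    using Cons reduce_append_reduce_left[of "rev u" "[x]"] by simp
  also have "\<dots> = rev (cancel_cons x (reduce u))"
  proof (cases "x = Eps \<and> reduce u \<noteq> [] \<and> hd (reduce u) = Eps")
    case True
    then obtain t where t: "reduce u = Eps # t" by (cases "reduce u") auto
    have "reduced (rev t)" using reduced_reduce[of u] t by (simp add: reduced_Cons reduced_rev)
    then show ?thesis
      using t True reduce_Eps_Eps[of "rev t" "[]"] by (simp add: reduce_reduced cancel_cons_def)
  next
    case False
    then have "reduced (rev (reduce u) @ [x])"
      using reduced_reduce[of u] reduced_rev[of "x # reduce u"] by (simp add: reduced_Cons)
    then show ?thesis using False unfolding cancel_cons_def by (auto simp: reduce_reduced)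
  qed
  finally show ?case by simp
qed simp

lemma reduce_replicate_Eps_even: "even n \<Longrightarrow> reduce (replicate n Eps @ u) = reduce u"
proof (induction n rule: nat_less_induct)
  case (1 n)
  then show ?case
    by (cases n rule: nat.exhaust[case_product nat.exhaust[of "n - 1"]])
      (auto simp: reduce_Eps_Eps[of "[]", simplified])
qed

lemma reduce_replicate_Eps_odd: "odd n \<Longrightarrow> reduce (replicate n Eps @ u) = reduce (Eps # u)"
  by (cases n) (auto simp: reduce_replicate_Eps_even)

lemma reduce_replicate: "x \<noteq> Eps \<Longrightarrow> reduce (replicate l x @ u) = replicate l x @ reduce u"
  by (induction l) (auto simp: cancel_cons_def)

lemma sim_rotate: "sim (rotate n w) w"
  unfolding sim_def by blast

lemma sim_rev: "sim (rev w) w"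
  unfolding sim_def by (metis rotate0 id_apply)

lemma sim_refl: "sim w w"
  using sim_rotate[of 0 w] by simp

lemma rotate_inverse: "\<exists>m. rotate m (rotate n w) = w"
proof -
  have "rotate (length w - n mod length w) (rotate n w) = w"
    by (cases "w = []") (auto simp: rotate_rotate rotate_conv_mod[of n w])
  then show ?thesis by blast
qed

lemma rev_rotate_eq_rotate_rev: "\<exists>m. rev (rotate n w) = rotate m (rev w)"
proof (cases "w = [] \<or> n mod length w = 0")
  case True
  then show ?thesis by (intro exI[of _ 0]) auto
next
  case False
  then have "(length w - n mod length w) mod length w = length w - n mod length w"
    by simp
  then have "rotate (length w - n mod length w) (rev w) = rev (rotate (n mod length w) w)"
    using False by (simp add: rotate_rev)
  then show ?thesis by (metis rotate_conv_mod)
qed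

lemma rotate_rev_eq_rev_rotate: "\<exists>m. rotate n (rev w) = rev (rotate m w)"
  using rotate_rev by blast

lemma sim_iff_rotate: "sim v w \<longleftrightarrow> (\<exists>n. v = rotate n w \<or> v = rotate n (rev w))"
  unfolding sim_def using rev_rotate_eq_rotate_rev rotate_rev_eq_rev_rotate by metis

lemma sim_trans: "sim u v \<Longrightarrow> sim v w \<Longrightarrow> sim u w"
proof -
  assume "sim u v" "sim v w"
  then obtain m n where m: "u = rotate m v \<or> u = rotate m (rev v)"
    and n: "v = rotate n w \<or> v = rotate n (rev w)"
    unfolding sim_iff_rotate by blast
  have rev_v: "\<exists>k. rev v = rotate k w \<or> rev v = rotate k (rev w)"
    using n rev_rotate_eq_rotate_rev[of n w] rev_rotate_eq_rotate_rev[of n "rev w"] by auto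
  show "sim u w"
    using m n rev_v unfolding sim_iff_rotate by (auto simp: rotate_rotate)
qed

lemma sim_sym: "sim v w \<Longrightarrow> sim w v"
proof -
  assume "sim v w"
  then obtain n where v: "v = rotate n w \<or> v = rev (rotate n w)" unfolding sim_def by blast
  obtain m where m: "rotate m (rotate n w) = w" using rotate_inverse by blast
  have "sim w (rotate n w)" using sim_rotate[of m "rotate n w"] m by simp
  moreover have "sim (rotate n w) v"
    using v sim_refl sim_rev[of "rotate n w"] sim_rev[of "rev (rotate n w)"] by auto
  ultimately show "sim w v" by (rule sim_trans)
qed

section \<open>Cyclic normal form\<close>

text \<open>On a reduced word a single strip suffices, since a reduced word has no adjacent pair of
  epsilons.\<close>

definition trim_cyclic :: "word \<Rightarrow> word" where
  "trim_cyclic r = (if 2 \<le> length r \<and> hd r = Eps \<and> last r = Eps then butlast (tl r) else r)"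

definition cyclic_reduce :: "word \<Rightarrow> word" where
  "cyclic_reduce w = trim_cyclic (reduce w)"

lemma trim_cyclic_wrap [simp]: "trim_cyclic (Eps # t @ [Eps]) = t"
  by (simp add: trim_cyclic_def)

lemma trim_cyclic_hd: "hd r \<noteq> Eps \<Longrightarrow> trim_cyclic r = r"
  by (simp add: trim_cyclic_def)

lemma trim_cyclic_last: "last r \<noteq> Eps \<Longrightarrow> trim_cyclic r = r"
  by (simp add: trim_cyclic_def)

lemma trim_cyclic_cases: "trim_cyclic r = r \<or> r = Eps # trim_cyclic r @ [Eps]"
proof (cases "2 \<le> length r \<and> hd r = Eps \<and> last r = Eps")
  case True
  then obtain t where "r = Eps # t" "t \<noteq> []" "last t = Eps"
    by (cases r) (auto split: if_splits)
  then show ?thesis by (simp add: trim_cyclic_def) (metis append_butlast_last_id)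
qed (auto simp: trim_cyclic_def)

lemma trim_cyclic_reduce_snoc_Eps:
  assumes r: "reduced n"
  shows "sim (trim_cyclic (reduce (n @ [Eps]))) (trim_cyclic (cancel_cons Eps n))"
proof (cases "n = [] \<or> last n \<noteq> Eps")
  case True
  then have "reduced (n @ [Eps])" using r by (auto simp: reduced_append)
  then have red: "reduce (n @ [Eps]) = n @ [Eps]" by (rule reduce_reduced)
  show ?thesis
  proof (cases "n \<noteq> [] \<and> hd n = Eps")
    case hd_Eps: True
    then obtain t where n: "n = Eps # t" by (cases n) auto
    have "t = [] \<or> hd t \<noteq> Eps" "t = [] \<or> last t \<noteq> Eps"
      using r True n by (auto simp: reduced_Cons)
    then show ?thesis
      using n red by (auto simp: cancel_cons_def trim_cyclic_hd trim_cyclic_last sim_refl)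
  next
    case False
    then have "cancel_cons Eps n = Eps # n" by (auto simp: cancel_cons_def)
    moreover have "trim_cyclic (Eps # n) = Eps # n"
      using True by (cases n) (auto simp: trim_cyclic_def)
    moreover have "trim_cyclic (n @ [Eps]) = n @ [Eps]"
      using False by (cases n) (auto simp: trim_cyclic_def)
    ultimately show ?thesis
      using red sim_rotate[of 1 "Eps # n"] by (auto simp: trim_cyclic_def)
  qed
next
  case False
  then obtain m where n: "n = m @ [Eps]" by (metis append_butlast_last_id)
  have rm: "reduced m" and m_last: "m = [] \<or> last m \<noteq> Eps"
    using r n by (auto simp: reduced_append)
  have red: "reduce (n @ [Eps]) = m"
    using n reduce_Eps_Eps[of m "[]"] reduce_reduced[OF rm] by simp
  show ?thesis
  proof (cases "m \<noteq> [] \<and> hd m = Eps")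
    case True
    then obtain t where m: "m = Eps # t" by (cases m) auto
    have "t \<noteq> []" using r n m by auto
    then have "hd t \<noteq> Eps" "last t \<noteq> Eps" using rm m_last m by (auto simp: reduced_Cons)
    then have "trim_cyclic m = Eps # t" "trim_cyclic (cancel_cons Eps n) = t @ [Eps]"
      using m n \<open>t \<noteq> []\<close> by (auto simp: cancel_cons_def trim_cyclic_last trim_cyclic_hd)
    then show ?thesis
      using red rotate_append[of t "[Eps]"] sim_rotate[of "length t" "t @ [Eps]"] by simp
  next
    case False
    then have "trim_cyclic m = m" by (cases m) (auto simp: trim_cyclic_def)
    moreover have "trim_cyclic (cancel_cons Eps n) = m"
      using False n by (cases m) (auto simp: cancel_cons_def trim_cyclic_def)
    ultimately show ?thesis using red by (simp add: sim_refl)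
  qed
qed

lemma cyclic_reduce_rotate1: "sim (cyclic_reduce (rotate1 w)) (cyclic_reduce w)"
proof (cases w)
  case (Cons a xs)
  have rot: "cyclic_reduce (rotate1 w) = trim_cyclic (reduce (reduce xs @ [a]))"
    using Cons reduce_append_reduce_left[of xs "[a]"] by (simp add: cyclic_reduce_def)
  have cr: "cyclic_reduce w = trim_cyclic (cancel_cons a (reduce xs))"
    using Cons by (simp add: cyclic_reduce_def)
  show ?thesis
  proof (cases "a = Eps")
    case True
    then show ?thesis
      using rot cr trim_cyclic_reduce_snoc_Eps[OF reduced_reduce] by simp
  next
    case False
    then have "reduced (reduce xs @ [a])" "reduced (a # reduce xs)"
      using reduced_reduce[of xs] by (auto simp: reduced_append reduced_Cons)
    then show ?thesis
      using rot cr False sim_rotate[of 1 "a # reduce xs"]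
      by (simp add: reduce_reduced cancel_cons_def trim_cyclic_hd trim_cyclic_last)
  qed
qed (simp add: sim_refl)

lemma cyclic_reduce_rotate: "sim (cyclic_reduce (rotate n w)) (cyclic_reduce w)"
  by (induction n) (auto simp: sim_refl intro: sim_trans[OF cyclic_reduce_rotate1])

lemma tl_rev: "tl (rev xs) = rev (butlast xs)"
  by (metis butlast_rev rev_rev_ident)

lemma cyclic_reduce_rev: "cyclic_reduce (rev w) = rev (cyclic_reduce w)"
  by (auto simp: cyclic_reduce_def trim_cyclic_def reduce_rev hd_rev last_rev tl_rev butlast_tl)

lemma cyclic_reduce_sim: "sim u v \<Longrightarrow> sim (cyclic_reduce u) (cyclic_reduce v)"
proof -
  assume "sim u v"
  then obtain n where "u = rotate n v \<or> u = rev (rotate n v)" unfolding sim_def by blast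
  moreover have "sim (cyclic_reduce (rev (rotate n v))) (cyclic_reduce (rotate n v))"
    by (simp add: cyclic_reduce_rev sim_rev)
  ultimately show ?thesis
    using cyclic_reduce_rotate[of n v] sim_trans by blast
qed

lemma cyclic_reduce_del_step: "del_step u v \<Longrightarrow> sim (cyclic_reduce v) (cyclic_reduce u)"
  unfolding del_step_def
proof (elim disjE exE conjE)
  fix xs ys assume "u = xs @ [Eps, Eps] @ ys" "v = xs @ ys"
  then show ?thesis by (simp add: cyclic_reduce_def reduce_Eps_Eps sim_refl)
next
  fix xs assume u: "u = Eps # xs @ [Eps]" and v: "v = xs"
  have "cyclic_reduce v = cyclic_reduce (rotate1 u)"
    using u v reduce_Eps_Eps[of xs "[]"] by (simp add: cyclic_reduce_def)
  then show ?thesis using cyclic_reduce_rotate1 by simp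
qed

lemma cyclic_reduce_del_steps: "del_step\<^sup>*\<^sup>* u v \<Longrightarrow> sim (cyclic_reduce v) (cyclic_reduce u)"
  by (induction rule: rtranclp_induct) (auto intro: sim_refl sim_trans cyclic_reduce_del_step)

lemma cyclic_reduce_irreducible:
  assumes "\<not> (\<exists>q. del_step p q)"
  shows "cyclic_reduce p = p"
proof -
  have "reduced p"
  proof (rule ccontr)
    assume "\<not> reduced p"
    then obtain xs ys where "p = xs @ Eps # Eps # ys" using not_reduced_split by blast
    then have "del_step p (xs @ ys)" unfolding del_step_def by auto
    then show False using assms by blast
  qed
  moreover have "trim_cyclic p = p"
  proof (rule ccontr)
    assume "trim_cyclic p \<noteq> p"
    then have "del_step p (trim_cyclic p)"
      using trim_cyclic_cases[of p] unfolding del_step_def by metis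
    then show False using assms by blast
  qed
  ultimately show ?thesis by (simp add: cyclic_reduce_def reduce_reduced)
qed

lemma pattern_exists: "\<exists>p. is_pattern w p"
proof (induction "length w" arbitrary: w rule: less_induct)
  case less
  show ?case
  proof (cases "\<exists>q. del_step w q")
    case True
    then obtain q where q: "del_step w q" by blast
    then have "length q < length w" unfolding del_step_def by auto
    then obtain p where "is_pattern q p" using less by blast
    then have "is_pattern w p" using q unfolding is_pattern_def
      by (meson converse_rtranclp_into_rtranclp)
    then show ?thesis by blast
  next
    case False
    then have "is_pattern w w" unfolding is_pattern_def by auto
    then show ?thesis by blast
  qed
qed

lemma pattern_sim_cyclic_reduce: "is_pattern w p \<Longrightarrow> sim p (cyclic_reduce w)"
  unfolding is_pattern_def using cyclic_reduce_del_steps cyclic_reduce_irreducible by fastforce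

lemma approx_iff_cyclic_reduce: "approx u v \<longleftrightarrow> sim (cyclic_reduce u) (cyclic_reduce v)"
proof -
  obtain pu pv where p: "is_pattern u pu" "is_pattern v pv" using pattern_exists by blast
  have u: "is_pattern u pu' \<Longrightarrow> sim pu' (cyclic_reduce u)"
    and v: "is_pattern v pv' \<Longrightarrow> sim pv' (cyclic_reduce v)" for pu' pv'
    using pattern_sim_cyclic_reduce by blast+
  show ?thesis
  proof
    assume "approx u v"
    then obtain pu' pv' where "is_pattern u pu'" "is_pattern v pv'" "sim pu' pv'"
      unfolding approx_def by blast
    then show "sim (cyclic_reduce u) (cyclic_reduce v)"
      using u v by (meson sim_sym sim_trans)
  next
    assume "sim (cyclic_reduce u) (cyclic_reduce v)"
    then have "sim pu pv" using u[OF p(1)] v[OF p(2)] by (meson sim_sym sim_trans)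
    then show "approx u v" using p unfolding approx_def by blast
  qed
qed

lemma approx_refl: "approx u u"
  by (simp add: approx_iff_cyclic_reduce sim_refl)

lemma approx_sym: "approx u v \<Longrightarrow> approx v u"
  by (simp add: approx_iff_cyclic_reduce sim_sym)

lemma approx_trans: "approx u v \<Longrightarrow> approx v w \<Longrightarrow> approx u w"
  unfolding approx_iff_cyclic_reduce by (rule sim_trans)

lemma approx_cyclic_reduce_eq: "cyclic_reduce u = cyclic_reduce v \<Longrightarrow> approx u v"
  by (simp add: approx_iff_cyclic_reduce sim_refl)

lemma cls_eq: "approx u v \<Longrightarrow> cls u = cls v"
  unfolding cls_def using approx_sym approx_trans by blast

section \<open>Letter substitutions and letter counts\<close>

lemma del_step_map: "f Eps = Eps \<Longrightarrow> del_step u v \<Longrightarrow> del_step (map f u) (map f v)"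
  unfolding del_step_def by (auto; metis map_append list.map)

lemma del_steps_map:
  assumes "f Eps = Eps"
  shows "del_step\<^sup>*\<^sup>* u v \<Longrightarrow> del_step\<^sup>*\<^sup>* (map f u) (map f v)"
  by (induction rule: rtranclp_induct)
    (auto intro: rtranclp.rtrancl_into_rtrancl del_step_map[of f, OF assms])

lemma sim_map: "sim u v \<Longrightarrow> sim (map f u) (map f v)"
  unfolding sim_def by (auto simp: rotate_map rev_map[symmetric])

lemma approx_map:
  assumes f: "f Eps = Eps" and "approx u v"
  shows "approx (map f u) (map f v)"
proof -
  obtain pu pv where p: "is_pattern u pu" "is_pattern v pv" "sim pu pv"
    using assms(2) unfolding approx_def by blast
  have "sim (cyclic_reduce (map f pu)) (cyclic_reduce (map f u))"
    "sim (cyclic_reduce (map f pv)) (cyclic_reduce (map f v))"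
    using p(1,2) del_steps_map[of f, OF f] cyclic_reduce_del_steps unfolding is_pattern_def by blast+
  moreover have "sim (cyclic_reduce (map f pu)) (cyclic_reduce (map f pv))"
    using p(3) sim_map cyclic_reduce_sim by blast
  ultimately show ?thesis
    unfolding approx_iff_cyclic_reduce by (meson sim_sym sim_trans)
qed

lemma count_cancel_cons: "x \<noteq> Eps \<Longrightarrow> count_list (cancel_cons z r) x = count_list (z # r) x"
  unfolding cancel_cons_def by (cases r) auto

lemma count_reduce: "x \<noteq> Eps \<Longrightarrow> count_list (reduce u) x = count_list u x"
  by (induction u) (auto simp: count_cancel_cons)

lemma count_trim_cyclic:
  assumes "x \<noteq> Eps"
  shows "count_list (trim_cyclic r) x = count_list r x"
proof -
  have "count_list (Eps # t @ [Eps]) x = count_list t x" for t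
    using assms by simp
  then show ?thesis using trim_cyclic_cases[of r] by metis
qed

lemma count_rotate1: "count_list (rotate1 w) x = count_list w x"
  by (cases w) auto

lemma count_rotate: "count_list (rotate n w) x = count_list w x"
  by (induction n) (auto simp: count_rotate1)

lemma count_sim: "sim u v \<Longrightarrow> count_list u x = count_list v x"
  unfolding sim_def by (auto simp: count_rotate)

lemma count_approx: "approx u v \<Longrightarrow> x \<noteq> Eps \<Longrightarrow> count_list u x = count_list v x"
  unfolding approx_iff_cyclic_reduce
  by (drule count_sim[of _ _ x]) (simp add: cyclic_reduce_def count_trim_cyclic count_reduce)

lemma proper_letters_approx: "approx u v \<Longrightarrow> proper_letters u = proper_letters v"
proof -
  assume "approx u v"
  then have "count_list u c = count_list v c" if "proper c" for c
    using that count_approx by (simp add: proper_def)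
  then show ?thesis
    unfolding proper_letters_def by (metis count_list_0_iff)
qed

lemma proper_letters_cls: "proper_letters_cls (cls w) = proper_letters w"
  unfolding proper_letters_cls_def cls_def using proper_letters_approx approx_refl by blast

lemma count_list_replicate: "count_list (replicate n y) x = (if y = x then n else 0)"
  by (induction n) auto

lemma count_map_eq: "(\<And>c. f c = x \<longleftrightarrow> c = x) \<Longrightarrow> count_list (map f u) x = count_list u x"
  by (induction u) auto

lemma count_map_two: "(\<And>c. f c = x \<longleftrightarrow> c = x \<or> c = z) \<Longrightarrow> x \<noteq> z \<Longrightarrow>
   count_list (map f u) x = count_list u x + count_list u z"
  by (induction u) auto

definition blocks_body :: "(letter \<times> nat) list \<Rightarrow> word" where
  "blocks_body bs = join_eps (map (\<lambda>(x, l). replicate l x) bs)"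

lemma blocks_word_eq: "blocks_word bs = Sig # blocks_body bs"
  by (simp add: blocks_word_def blocks_body_def)

lemma blocks_body_Nil [simp]: "blocks_body [] = []"
  by (simp add: blocks_body_def)

lemma join_eps_Cons: "join_eps (b # bss) = b @ (if bss = [] then [] else Eps # join_eps bss)"
  by (cases bss) auto

lemma blocks_body_Cons:
  "blocks_body ((x, l) # cs) = replicate l x @ (if cs = [] then [] else Eps # blocks_body cs)"
  by (simp add: blocks_body_def join_eps_Cons)

lemma blocks_ok_Cons:
  "blocks_ok ((x, l) # cs) \<longleftrightarrow> proper x \<and> 0 < l \<and> (cs = [] \<or> blocks_ok cs \<and> x \<noteq> fst (cs ! 0))"
  unfolding blocks_ok_def
  by (cases cs) (auto simp: nth_Cons split: nat.splits)

lemma blocks_ok_mem: "blocks_ok bs \<Longrightarrow> c \<in> set bs \<Longrightarrow> proper (fst c) \<and> 0 < snd c"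
  unfolding blocks_ok_def by (cases c) auto

lemma blocks_okD:
  assumes "blocks_ok bs" "k < length bs"
  shows "proper (fst (bs ! k))" "0 < snd (bs ! k)"
    "Suc k < length bs \<Longrightarrow> fst (bs ! k) \<noteq> fst (bs ! Suc k)"
  using assms blocks_ok_mem[OF assms(1) nth_mem[OF assms(2)]] unfolding blocks_ok_def by auto

lemma set_blocks_body: "set (blocks_body bs) \<subseteq> insert Eps (fst ` set bs)"
proof (induction bs)
  case (Cons c bs)
  then show ?case by (cases c) (auto simp: blocks_body_Cons)
qed simp

lemma proper_letters_blocks_word:
  assumes "blocks_ok bs"
  shows "proper_letters (blocks_word bs) = fst ` set bs"
proof -
  have "fst c \<in> set (blocks_body bs)" if "c \<in> set bs" for c
    using that blocks_ok_mem[OF assms that]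
    by (induction bs) (auto simp: blocks_body_Cons split: prod.splits)
  then show ?thesis
    using set_blocks_body[of bs] blocks_ok_mem[OF assms]
    unfolding proper_letters_def blocks_word_eq proper_def by auto
qed

lemma count_blocks_body:
  "x \<noteq> Eps \<Longrightarrow> count_list (blocks_body bs) x = (\<Sum>c\<leftarrow>bs. if fst c = x then snd c else 0)"
  by (induction bs) (auto simp: blocks_body_Cons count_list_replicate)

lemma exponent_sum_eq_count:
  assumes "blocks_ok bs"
  shows "(\<Sum>h<length bs. if fst (bs ! h) = x then snd (bs ! h) else 0)
          = (if proper x then count_list (blocks_word bs) x else 0)"
proof -
  have "(\<Sum>h<length bs. if fst (bs ! h) = x then snd (bs ! h) else 0)
      = (\<Sum>c\<leftarrow>bs. if fst c = x then snd c else 0)"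
    by (simp add: sum_list_sum_nth atLeast0LessThan)
  also have "\<dots> = (if proper x then count_list (blocks_word bs) x else 0)"
  proof (cases "proper x")
    case True
    then have "x \<noteq> Eps" "x \<noteq> Sig" by (auto simp: proper_def)
    then show ?thesis using True by (simp add: blocks_word_eq count_blocks_body)
  next
    case False
    then have "map (\<lambda>c. if fst c = x then snd c else 0) bs = map (\<lambda>c. 0) bs"
      using blocks_ok_mem[OF assms] by auto
    then show ?thesis using False by (simp add: sum_list_replicate)
  qed
  finally show ?thesis .
qed

section \<open>Erasing a letter from a block word\<close>

definition parity_blocks :: "(letter \<times> nat) list \<Rightarrow> bool" where
  "parity_blocks bs \<longleftrightarrow> blocks_ok bs \<and> odd (snd (bs ! 0)) \<and> odd (snd (bs ! (length bs - 1))) \<and>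
     (\<forall>h. 1 \<le> h \<and> h < length bs - 1 \<longrightarrow>
        (odd (snd (bs ! h)) \<longleftrightarrow> fst (bs ! (h - 1)) \<noteq> fst (bs ! (h + 1))))"

definition erase_block :: "letter \<Rightarrow> letter \<times> nat \<Rightarrow> word" where
  "erase_block y c = replicate (snd c) (if fst c = y then Eps else fst c)"

definition erased_suffix :: "letter \<Rightarrow> (letter \<times> nat) list \<Rightarrow> nat \<Rightarrow> word" where
  "erased_suffix y bs k = join_eps (map (erase_block y) (drop k bs))"

definition erases_to :: "letter \<Rightarrow> (letter \<times> nat) list \<Rightarrow> nat \<Rightarrow> (letter \<times> nat) list \<Rightarrow> bool" where
  "erases_to y bs k cs \<longleftrightarrow> blocks_ok cs \<and> fst (cs ! 0) = fst (bs ! k) \<and>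
     fst ` set cs \<subseteq> fst ` set bs - {y} \<and> reduce (erased_suffix y bs k) = reduce (blocks_body cs)"

lemma erased_suffix_unfold:
  assumes "k < length bs"
  shows "erased_suffix y bs k =
    erase_block y (bs ! k) @ (if Suc k < length bs then Eps # erased_suffix y bs (Suc k) else [])"
proof -
  have "drop k bs = bs ! k # drop (Suc k) bs" using assms by (simp add: Cons_nth_drop_Suc)
  then show ?thesis unfolding erased_suffix_def by (simp add: join_eps_Cons)
qed

lemma erases_to_single:
  assumes "blocks_ok bs" "k < length bs" "fst (bs ! k) \<noteq> y"
    and "reduce (erased_suffix y bs k) = replicate (snd (bs ! k)) (fst (bs ! k))"
  shows "erases_to y bs k [bs ! k]"
  using assms blocks_okD[OF assms(1,2)] reduce_replicate[of "fst (bs ! k)" "snd (bs ! k)" "[]"]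
    imageI[OF nth_mem[OF assms(2)], of fst]
  unfolding erases_to_def
  by (cases "bs ! k") (auto simp: blocks_ok_Cons blocks_body_def proper_def)

lemma erases_to_Cons:
  assumes "blocks_ok bs" "k < length bs" "fst (bs ! k) \<noteq> y"
    and "erases_to y bs j cs" "fst (bs ! j) \<noteq> fst (bs ! k)"
    and "reduce (erased_suffix y bs k) =
      reduce (replicate (snd (bs ! k)) (fst (bs ! k)) @ Eps # erased_suffix y bs j)"
  shows "erases_to y bs k (bs ! k # cs)"
proof -
  obtain x l where xl: "bs ! k = (x, l)" by (cases "bs ! k")
  have cs: "blocks_ok cs" "cs \<noteq> []" "fst (cs ! 0) = fst (bs ! j)"
    "reduce (erased_suffix y bs j) = reduce (blocks_body cs)"
    using assms(4) by (auto simp: erases_to_def blocks_ok_def)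
  have "reduce (erased_suffix y bs k) = reduce ((replicate l x @ [Eps]) @ blocks_body cs)"
    using assms(6) xl reduce_append_cong[OF cs(4), of "replicate l x @ [Eps]"] by simp
  then show ?thesis
    using assms blocks_okD[OF assms(1,2)] cs xl imageI[OF nth_mem[OF assms(2)], of fst]
    by (auto simp: erases_to_def blocks_ok_Cons blocks_body_Cons)
qed

lemma erases_to_merge:
  assumes "k < length bs" "fst (bs ! k) \<noteq> y"
    and "erases_to y bs j ((x, m) # rest)" "fst (bs ! j) = fst (bs ! k)"
    and "reduce (erased_suffix y bs k) =
      reduce (replicate (snd (bs ! k)) (fst (bs ! k)) @ erased_suffix y bs j)"
  shows "erases_to y bs k ((x, snd (bs ! k) + m) # rest)"
proof -
  have x: "x = fst (bs ! k)" using assms(3,4) by (simp add: erases_to_def)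
  have "reduce (erased_suffix y bs j) = reduce (blocks_body ((x, m) # rest))"
    using assms(3) by (simp add: erases_to_def)
  then have "reduce (erased_suffix y bs k) = reduce (replicate (snd (bs ! k)) x @ blocks_body ((x, m) # rest))"
    using assms(5) x reduce_append_cong by metis
  moreover have "replicate (snd (bs ! k)) x @ blocks_body ((x, m) # rest)
      = blocks_body ((x, snd (bs ! k) + m) # rest)"
    by (simp add: blocks_body_Cons replicate_add)
  ultimately show ?thesis
    using assms(3,4) by (auto simp: erases_to_def blocks_ok_Cons)
qed

lemma erased_suffix_skip:
  assumes "Suc k < length bs" "fst (bs ! k) \<noteq> y" "fst (bs ! Suc k) = y"
  shows "erased_suffix y bs k = replicate (snd (bs ! k)) (fst (bs ! k)) @
    replicate (Suc (snd (bs ! Suc k))) Eps @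
    (if Suc (Suc k) < length bs then Eps # erased_suffix y bs (Suc (Suc k)) else [])"
  using assms erased_suffix_unfold[OF assms(1)] erased_suffix_unfold[of k bs y]
  by (simp add: erase_block_def)

lemma erases_to_skip:
  assumes pb: "parity_blocks bs" and k: "Suc k < length bs" "fst (bs ! k) \<noteq> y"
    and y: "fst (bs ! Suc k) = y"
    and IH: "Suc (Suc k) < length bs \<Longrightarrow> \<exists>cs. erases_to y bs (Suc (Suc k)) cs"
  shows "\<exists>cs. erases_to y bs k cs"
proof -
  have ok: "blocks_ok bs" using pb by (simp add: parity_blocks_def)
  have k': "k < length bs" using k by simp
  define x l l1 where "x = fst (bs ! k)" and "l = snd (bs ! k)" and "l1 = snd (bs ! Suc k)"
  have "x \<noteq> Eps" using blocks_okD(1)[OF ok k'] x_def by (simp add: proper_def)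
  note E = erased_suffix_skip[OF k y, folded x_def l_def l1_def]
  show ?thesis
  proof (cases "Suc (Suc k) < length bs")
    case False
    then have "length bs - 1 = Suc k" using k by simp
    then have "odd l1" using pb l1_def unfolding parity_blocks_def by metis
    then have "even (Suc l1)" by simp
    then have "reduce (erased_suffix y bs k) = replicate l x"
      using E False \<open>x \<noteq> Eps\<close> reduce_replicate_Eps_even[of "Suc l1" "[]"]
        reduce_replicate[of x l "replicate (Suc l1) Eps"]
      by (simp del: replicate_Suc)
    then show ?thesis using erases_to_single[OF ok k' k(2)] x_def l_def by blast
  next
    case ssk: True
    then obtain cs where cs: "erases_to y bs (Suc (Suc k)) cs" using IH by blast
    have parity: "odd l1 \<longleftrightarrow> x \<noteq> fst (bs ! Suc (Suc k))"
      using pb ssk x_def l1_def by (auto simp: parity_blocks_def)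
    have E2: "erased_suffix y bs k =
        replicate l x @ replicate (Suc (Suc l1)) Eps @ erased_suffix y bs (Suc (Suc k))"
      using E ssk by (simp add: replicate_app_Cons_same)
    show ?thesis
    proof (cases "odd l1")
      case True
      then have "odd (Suc (Suc l1))" by simp
      from reduce_append_cong[OF reduce_replicate_Eps_odd[OF this], of "replicate l x"]
      have "reduce (erased_suffix y bs k) =
          reduce (replicate l x @ Eps # erased_suffix y bs (Suc (Suc k)))"
        using E2 by simp
      then have "erases_to y bs k (bs ! k # cs)"
        using erases_to_Cons[OF ok k' k(2) cs] True parity x_def l_def by auto
      then show ?thesis by blast
    next
      case False
      obtain x' m rest where "cs = (x', m) # rest"
        using cs by (cases cs) (auto simp: erases_to_def blocks_ok_def)
      moreover have "even (Suc (Suc l1))" using False by simp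
      from reduce_append_cong[OF reduce_replicate_Eps_even[OF this], of "replicate l x"]
      have "reduce (erased_suffix y bs k) =
          reduce (replicate l x @ erased_suffix y bs (Suc (Suc k)))"
        using E2 by simp
      ultimately have "erases_to y bs k ((x', l + m) # rest)"
        using erases_to_merge[OF k' k(2)] cs False parity x_def l_def by auto
      then show ?thesis by blast
    qed
  qed
qed

lemma erases_to_exists:
  assumes pb: "parity_blocks bs"
  shows "k < length bs \<Longrightarrow> fst (bs ! k) \<noteq> y \<Longrightarrow> \<exists>cs. erases_to y bs k cs"
proof (induction "length bs - k" arbitrary: k rule: less_induct)
  case less
  have ok: "blocks_ok bs" using pb by (simp add: parity_blocks_def)
  have E: "erased_suffix y bs k = replicate (snd (bs ! k)) (fst (bs ! k)) @
      (if Suc k < length bs then Eps # erased_suffix y bs (Suc k) else [])"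
    using erased_suffix_unfold[OF less.prems(1)] less.prems(2) by (simp add: erase_block_def)
  consider "\<not> Suc k < length bs" | "Suc k < length bs" "fst (bs ! Suc k) \<noteq> y"
    | "Suc k < length bs" "fst (bs ! Suc k) = y" by blast
  then show ?case
  proof cases
    case 1
    have "fst (bs ! k) \<noteq> Eps" using blocks_okD(1)[OF ok less.prems(1)] by (simp add: proper_def)
    then show ?thesis
      using erases_to_single[OF ok less.prems] E 1 reduce_replicate[of "fst (bs ! k)" _ "[]"]
      by auto
  next
    case 2
    then obtain cs where cs: "erases_to y bs (Suc k) cs"
      using less.hyps[of "Suc k"] by (metis Suc_lessD diff_less_mono2 lessI)
    have "erases_to y bs k (bs ! k # cs)"
      by (rule erases_to_Cons[OF ok less.prems cs])
        (use blocks_okD(3)[OF ok less.prems(1)] E 2 in auto)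
    then show ?thesis by blast
  next
    case 3
    have "\<exists>cs. erases_to y bs (Suc (Suc k)) cs" if "Suc (Suc k) < length bs"
    proof -
      have "fst (bs ! Suc (Suc k)) \<noteq> y" using blocks_okD(3)[OF ok _ that] 3 by simp
      moreover have "length bs - Suc (Suc k) < length bs - k" using that by simp
      ultimately show ?thesis using less.hyps that by blast
    qed
    then show ?thesis using erases_to_skip[OF pb 3(1) less.prems(2) 3(2)] by blast
  qed
qed

lemma erased_body_reduces_to_blocks:
  assumes pb: "parity_blocks bs" and long: "1 < length bs"
  shows "\<exists>cs. blocks_ok cs \<and> fst ` set cs \<subseteq> fst ` set bs - {y} \<and>
    reduce (erased_suffix y bs 0) = reduce (blocks_body cs)"
proof -
  have ok: "blocks_ok bs" using pb by (simp add: parity_blocks_def)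
  have ne: "0 < length bs" using long by linarith
  show ?thesis
  proof (cases "fst (bs ! 0) = y")
    case False
    then obtain cs where "erases_to y bs 0 cs" using erases_to_exists[OF pb ne] by blast
    then show ?thesis by (auto simp: erases_to_def)
  next
    case True
    then have "fst (bs ! 1) \<noteq> y" using blocks_okD(3)[OF ok ne] long by simp
    then obtain cs where cs: "erases_to y bs 1 cs" using erases_to_exists[OF pb long] by blast
    have "erased_suffix y bs 0 = replicate (Suc (snd (bs ! 0))) Eps @ erased_suffix y bs 1"
      using erased_suffix_unfold[OF ne, of y] long True
      by (simp add: erase_block_def replicate_app_Cons_same)
    moreover have "even (Suc (snd (bs ! 0)))" using pb by (simp add: parity_blocks_def)
    ultimately have "reduce (erased_suffix y bs 0) = reduce (erased_suffix y bs 1)"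
      by (simp del: replicate_Suc add: reduce_replicate_Eps_even)
    then show ?thesis using cs by (auto simp: erases_to_def)
  qed
qed

lemma map_join_eps: "f Eps = Eps \<Longrightarrow> map f (join_eps bss) = join_eps (map (map f) bss)"
  by (induction bss rule: join_eps.induct) auto

lemma map_blocks_body_erase:
  assumes "blocks_ok bs" "f Eps = Eps" "f y = Eps" "\<And>x. proper x \<Longrightarrow> x \<noteq> y \<Longrightarrow> f x = x"
  shows "map f (blocks_body bs) = erased_suffix y bs 0"
proof -
  have "map f (replicate (snd c) (fst c)) = erase_block y c" if "c \<in> set bs" for c
    using assms blocks_ok_mem[OF assms(1) that] by (auto simp: erase_block_def map_replicate)
  then show ?thesis
    unfolding blocks_body_def erased_suffix_def map_join_eps[of f, OF assms(2)]
    by (auto intro!: arg_cong[of _ _ join_eps] split: prod.splits)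
qed

lemma approx_map_erase:
  assumes pb: "parity_blocks bs" and long: "1 < length bs"
    and f: "f Eps = Eps" "f y = Eps" "\<And>x. proper x \<Longrightarrow> x \<noteq> y \<Longrightarrow> f x = x"
  shows "\<exists>cs. blocks_ok cs \<and> fst ` set cs \<subseteq> fst ` set bs - {y} \<and>
    approx (map f (blocks_word bs)) (f Sig # blocks_body cs)"
proof -
  obtain cs where cs: "blocks_ok cs" "fst ` set cs \<subseteq> fst ` set bs - {y}"
    "reduce (erased_suffix y bs 0) = reduce (blocks_body cs)"
    using erased_body_reduces_to_blocks[OF pb long] by blast
  have "map f (blocks_word bs) = f Sig # erased_suffix y bs 0"
    using pb f map_blocks_body_erase[of bs f y] by (simp add: blocks_word_eq parity_blocks_def)
  then have "cyclic_reduce (map f (blocks_word bs)) = cyclic_reduce (f Sig # blocks_body cs)"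
    using cs(3) by (simp add: cyclic_reduce_def)
  then show ?thesis using cs(1,2) approx_cyclic_reduce_eq by blast
qed

lemma parity_conditions_blocks:
  "parity_conditions W \<Longrightarrow> \<exists>bs. parity_blocks bs \<and> blocks_word bs \<in> W"
  unfolding parity_conditions_def parity_blocks_def Let_def by blast

lemma even_count_of_s_word:
  assumes "s_word W" "2 \<le> card (proper_letters_cls W)" "u \<in> W" "proper x"
  shows "even (count_list u x)"
  using assms(1) unfolding s_word_def
proof (elim disjE exE conjE)
  fix a lam assume "W = cls (replicate lam a)"
  then have "proper_letters_cls W \<subseteq> {a}"
    by (auto simp: proper_letters_cls proper_letters_def)
  then have "card (proper_letters_cls W) \<le> 1"
    using card_mono[of "{a}"] by fastforce
  then show ?thesis using assms(2) by simp
next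
  fix bs
  assume ok: "blocks_ok bs"
    and even: "\<forall>x. even (\<Sum>h<length bs. if fst (bs ! h) = x then snd (bs ! h) else 0)"
    and "W = cls (blocks_word bs)"
  then have "approx u (blocks_word bs)" using assms(3) by (simp add: cls_def)
  then have "count_list u x = count_list (blocks_word bs) x"
    using count_approx assms(4) by (simp add: proper_def)
  then show ?thesis
    using even[rule_format, of x] exponent_sum_eq_count[OF ok, of x] assms(4) by simp
qed

lemma blocks_ok_one_letter:
  assumes "blocks_ok cs" "fst ` set cs \<subseteq> {b}"
  shows "\<exists>m. cs = [(b, m)]"
proof (cases cs)
  case (Cons c rest)
  have "rest = []"
  proof (rule ccontr)
    assume "rest \<noteq> []"
    then have "1 < length cs" using Cons by simp
    moreover have "0 < length cs" using Cons by simp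
    ultimately have "fst (cs ! 0) \<noteq> fst (cs ! 1)" "cs ! 0 \<in> set cs" "cs ! 1 \<in> set cs"
      using blocks_okD(3)[OF assms(1)] by auto
    then show False using assms(2) by blast
  qed
  then show ?thesis using Cons assms(2) by (cases c) auto
qed (use assms in \<open>simp add: blocks_ok_def\<close>)

lemma count_Sig_blocks_word:
  assumes "blocks_ok bs"
  shows "count_list (blocks_word bs) Sig = 1"
proof -
  have "Sig \<notin> set (blocks_body bs)"
    using set_blocks_body[of bs] blocks_ok_mem[OF assms] by (fastforce simp: proper_def)
  then show ?thesis by (simp add: blocks_word_eq)
qed

lemma s_word_erase_letter:
  assumes pb: "parity_blocks bs" and long: "1 < length bs" and w: "approx w (blocks_word bs)"
    and y: "proper y" and even: "\<And>x. proper x \<Longrightarrow> even (count_list w x)"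
  shows "s_word (cls (map (\<lambda>c. if c = y then Eps else c) w))"
proof -
  let ?f = "\<lambda>c. if c = y then Eps else c"
  have f: "?f Eps = Eps" "?f y = Eps" "\<And>x. proper x \<Longrightarrow> x \<noteq> y \<Longrightarrow> ?f x = x" "?f Sig = Sig"
    using y by (auto simp: proper_def)
  obtain cs where cs: "blocks_ok cs" "approx (map ?f (blocks_word bs)) (blocks_word cs)"
    using approx_map_erase[OF pb long f(1-3)] f(4) by (auto simp: blocks_word_eq)
  then have approx: "approx (map ?f w) (blocks_word cs)"
    using approx_trans[OF approx_map[of ?f, OF f(1) w]] by blast
  have "even (count_list (blocks_word cs) x)" if "proper x" for x
  proof -
    have "count_list (blocks_word cs) x = count_list (map ?f w) x"
      using count_approx[OF approx_sym[OF approx]] that by (simp add: proper_def)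
    also have "\<dots> = (if x = y then 0 else count_list w x)"
      using that by (auto simp: proper_def count_map_eq count_list_0_iff)
    finally show ?thesis using even[OF that] by simp
  qed
  then have "\<forall>x. even (\<Sum>h<length cs. if fst (cs ! h) = x then snd (cs ! h) else 0)"
    using exponent_sum_eq_count[OF cs(1)] by simp
  then show ?thesis unfolding s_word_def using cs(1) cls_eq[OF approx] by blast
qed

lemma s_word_erase_letter_two:
  assumes pb: "parity_blocks bs" and long: "1 < length bs" and w: "approx w (blocks_word bs)"
    and letters: "fst ` set bs = {y, b}" "y \<noteq> b"
    and even: "\<And>x. proper x \<Longrightarrow> even (count_list w x)"
  shows "s_word (cls (map (\<lambda>c. if c = y then Eps else if c = Sig then b else c) w))"
proof -
  let ?f = "\<lambda>c. if c = y then Eps else if c = Sig then b else c"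
  have ok: "blocks_ok bs" using pb by (simp add: parity_blocks_def)
  have "y \<in> fst ` set bs" "b \<in> fst ` set bs" using letters by auto
  then have proper: "proper y" "proper b" using blocks_ok_mem[OF ok] by auto
  then have f: "?f Eps = Eps" "?f y = Eps" "\<And>x. proper x \<Longrightarrow> x \<noteq> y \<Longrightarrow> ?f x = x"
    "?f Sig = b" "b \<noteq> Eps"
    by (auto simp: proper_def)
  obtain cs where cs: "blocks_ok cs" "fst ` set cs \<subseteq> {b}"
    "approx (map ?f (blocks_word bs)) (b # blocks_body cs)"
    using approx_map_erase[OF pb long f(1-3)] f(4) letters by auto
  then obtain m where "cs = [(b, m)]" using blocks_ok_one_letter by blast
  then have approx: "approx (map ?f w) (replicate (Suc m) b)"
    using approx_trans[OF approx_map[of ?f, OF f(1) w] cs(3)] by (simp add: blocks_body_def)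
  have "Suc m = count_list (map ?f w) b"
    using count_approx[OF approx f(5)] by (simp add: count_list_replicate)
  also have "\<dots> = count_list w b + count_list w Sig"
    by (rule count_map_two) (use proper letters(2) in \<open>auto simp: proper_def\<close>)
  also have "count_list w Sig = 1"
    using count_approx[OF w] count_Sig_blocks_word[OF ok] by simp
  finally have "odd (Suc m)" using even[OF proper(2)] by simp
  then show ?thesis unfolding s_word_def using proper(2) cls_eq[OF approx] by blast
qed

theorem lemma7:
  fixes W :: "word set" and w :: word and y :: letter
  assumes "s_word W"
    and "W = cls w"
    and "card (proper_letters_cls W) \<ge> 2"
    and "parity_conditions W"
    and "y \<in> proper_letters_cls W"
  shows "s_word (cls (proj y w))"
proof -
  obtain bs where pb: "parity_blocks bs" and "blocks_word bs \<in> W"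
    using parity_conditions_blocks[OF assms(4)] by blast
  then have approx: "approx w (blocks_word bs)" using assms(2) by (simp add: cls_def approx_sym)
  have letters: "proper_letters w = fst ` set bs"
    using proper_letters_approx[OF approx] proper_letters_blocks_word pb
    by (simp add: parity_blocks_def)
  have card: "2 \<le> card (proper_letters w)" using assms(2,3) by (simp add: proper_letters_cls)
  have long: "1 < length bs"
    using card card_image_le[of "set bs" fst] card_length[of bs] letters by simp
  have y: "y \<in> proper_letters w" using assms(2,5) by (simp add: proper_letters_cls)
  have even: "\<And>x. proper x \<Longrightarrow> even (count_list w x)"
    using even_count_of_s_word[OF assms(1,3)] assms(2) by (simp add: cls_def approx_refl)
  show ?thesis
  proof (cases "card (proper_letters w) = 2")
    case True
    then obtain b where b: "proper_letters w = {y, b}" "y \<noteq> b"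
      using y by (metis card_2_iff insert_commute insertE singletonD)
    then have "proj y w = map (\<lambda>c. if c = y then Eps else if c = Sig then b else c) w"
      using True by (simp add: proj_def insert_Diff_if)
    then show ?thesis
      using s_word_erase_letter_two[OF pb long approx _ b(2) even] b letters by simp
  next
    case False
    then show ?thesis
      using s_word_erase_letter[OF pb long approx _ even] y
      by (simp add: proj_def proper_letters_def)
  qed
qed

end
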